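(* Let $0 \le \alpha \le \beta < \infty$ and let $\varphi\colon\mathbb{R}\to\mathbb{R}$ satisfy $\alpha \le \frac{\varphi(a)-\varphi(b)}{a-b} \le \beta$ for all $a \ne b$; let $\phi$ denote componentwise application of $\varphi$. Let $L \ge 1$ and consider matrices $W_k$ ($k = 0,\dots,L$, with $W_L = I$), $H_k$, $G_k$ ($k = 0,\dots,L-1$) of compatible dimensions, and the network defined from input $x_0$ by $$y_k = W_k x_k \ (k = 0,\dots,L), \qquad x_{k+1} = H_k x_k + G_k \phi(y_k) \ (k = 0,\dots,L-1).$$ Let $\hat{H}_k := H_k + \frac{\alpha+\beta}{2} G_k W_k$, with the convention that $\hat H_k\cdots\hat H_{j+1} = I$ when $j=k$. Fix $p\in[1,\infty]$, use the $\ell_p$ norm on all vector spaces and the induced operator norm $\|\cdot\|$ on matrices. Define $m_0 := \|W_0\|$ and recursively, for $k = 0,\dots,L-1$, $$m_{k+1} := \|W_{k+1}\hat{H}_k \cdots \hat{H}_0\| + \frac{\beta - \alpha}{2}\sum_{j=0}^{k} \|W_{k+1}\hat{H}_k \cdots \hat{H}_{j+1} G_j\|\, m_j.$$ Then for each $k = 0,\dots,L$, $m_k$ is a Lipschitz constant of the map $x_0 \mapsto y_k$, i.e. $\|y_k(x_0) - y_k(x_0')\|_p \le m_k \|x_0 - x_0'\|_p$ for all inputs $x_0, x_0'$. In particular, $m_L$ is a Lipschitz constant of the network map $x_0 \mapsto y_L = x_L$. *)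

theory Defs
  imports "Jordan_Normal_Form.Matrix" "HOL-Library.Extended_Real"
begin

definition lp_norm :: "ereal \<Rightarrow> real vec \<Rightarrow> real" where
  "lp_norm p v =
     (if p = \<infinity> then Max (insert 0 {\<bar>v $ i\<bar> | i. i < dim_vec v})
      else (\<Sum>i<dim_vec v. \<bar>v $ i\<bar> powr real_of_ereal p) powr (1 / real_of_ereal p))"

definition op_norm :: "ereal \<Rightarrow> real mat \<Rightarrow> real" where
  "op_norm p A = Sup {lp_norm p (A *\<^sub>v x) | x. x \<in> carrier_vec (dim_col A) \<and> lp_norm p x \<le> 1}"

primrec net_x :: "(real \<Rightarrow> real) \<Rightarrow> (nat \<Rightarrow> real mat) \<Rightarrow> (nat \<Rightarrow> real mat) \<Rightarrow> (nat \<Rightarrow> real mat)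
                  \<Rightarrow> nat \<Rightarrow> real vec \<Rightarrow> real vec" where
  "net_x \<phi> W H G 0 x0 = x0"
| "net_x \<phi> W H G (Suc k) x0 =
     H k *\<^sub>v net_x \<phi> W H G k x0 + G k *\<^sub>v map_vec \<phi> (W k *\<^sub>v net_x \<phi> W H G k x0)"

definition net_y :: "(real \<Rightarrow> real) \<Rightarrow> (nat \<Rightarrow> real mat) \<Rightarrow> (nat \<Rightarrow> real mat) \<Rightarrow> (nat \<Rightarrow> real mat)
                  \<Rightarrow> nat \<Rightarrow> real vec \<Rightarrow> real vec" where
  "net_y \<phi> W H G k x0 = W k *\<^sub>v net_x \<phi> W H G k x0"

definition Hhat :: "real \<Rightarrow> real \<Rightarrow> (nat \<Rightarrow> real mat) \<Rightarrow> (nat \<Rightarrow> real mat) \<Rightarrow> (nat \<Rightarrow> real mat)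
                    \<Rightarrow> nat \<Rightarrow> real mat" where
  "Hhat \<alpha> \<beta> W H G k = H k + ((\<alpha> + \<beta>) / 2) \<cdot>\<^sub>m (G k * W k)"

text \<open>hchain n Hh i m = Hh (i+m-1) * ... * Hh i, and the identity of size n i when m = 0.
  Thus Hhat_k ... Hhat_(j+1) = hchain n Hh (j+1) (k-j) and Hhat_k ... Hhat_0 = hchain n Hh 0 (k+1).\<close>
primrec hchain :: "(nat \<Rightarrow> nat) \<Rightarrow> (nat \<Rightarrow> real mat) \<Rightarrow> nat \<Rightarrow> nat \<Rightarrow> real mat" where
  "hchain n Hh i 0 = 1\<^sub>m (n i)"
| "hchain n Hh i (Suc m) = Hh (i + m) * hchain n Hh i m"

fun lip_m :: "ereal \<Rightarrow> real \<Rightarrow> real \<Rightarrow> (nat \<Rightarrow> nat) \<Rightarrow> (nat \<Rightarrow> real mat) \<Rightarrow> (nat \<Rightarrow> real mat)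
              \<Rightarrow> (nat \<Rightarrow> real mat) \<Rightarrow> nat \<Rightarrow> real" where
  "lip_m p \<alpha> \<beta> n W H G 0 = op_norm p (W 0)"
| "lip_m p \<alpha> \<beta> n W H G (Suc k) =
     op_norm p (W (Suc k) * hchain n (Hhat \<alpha> \<beta> W H G) 0 (Suc k))
     + (\<beta> - \<alpha>) / 2 * (\<Sum>j\<in>{0..k}.
          op_norm p (W (Suc k) * hchain n (Hhat \<alpha> \<beta> W H G) (Suc j) (k - j) * G j)
          * lip_m p \<alpha> \<beta> n W H G j)"

end

theory Submission imports Defs "HOL-Analysis.Convex" begin

text \<open>Let \<open>\<delta>\<^sub>k\<close> be the difference of the states for two inputs and \<open>c = (\<alpha>+\<beta>)/2\<close>.
  Splitting \<open>\<phi>\<close> into its linear part of slope \<open>c\<close> and a residual gives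
  \<open>\<delta>\<^sub>k\<^sub>+\<^sub>1 = Hhat\<^sub>k \<delta>\<^sub>k + G\<^sub>k e\<^sub>k\<close>, where the slope bounds make the residual \<open>e\<^sub>k\<close>
  componentwise at most \<open>(\<beta>-\<alpha>)/2\<close> times \<open>W\<^sub>k \<delta>\<^sub>k\<close>. Unrolling this linear recursion
  expresses \<open>W\<^sub>k\<^sub>+\<^sub>1 \<delta>\<^sub>k\<^sub>+\<^sub>1\<close> through \<open>\<delta>\<^sub>0\<close> and \<open>e\<^sub>0, \<dots>, e\<^sub>k\<close>; taking operator norms and
  bounding each \<open>e\<^sub>j\<close> by the already established Lipschitz bound \<open>m\<^sub>j\<close> yields exactly the
  recursion defining \<open>m\<^sub>k\<^sub>+\<^sub>1\<close>. The only analytic input is Minkowski's inequality for \<open>\<ell>\<^sub>p\<close>,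
  obtained from convexity of \<open>t \<mapsto> t\<^sup>p\<close>.\<close>

lemma real_of_ereal_ge_1: "1 \<le> p \<Longrightarrow> p \<noteq> \<infinity> \<Longrightarrow> 1 \<le> real_of_ereal p"
  by (cases p) auto

lemma lp_norm_finite:
  "p \<noteq> \<infinity> \<Longrightarrow> lp_norm p v = (\<Sum>i<dim_vec v. \<bar>v $ i\<bar> powr real_of_ereal p) powr (1 / real_of_ereal p)"
  by (simp add: lp_norm_def)

lemma lp_norm_infinity_le_iff: "lp_norm \<infinity> v \<le> B \<longleftrightarrow> 0 \<le> B \<and> (\<forall>i<dim_vec v. \<bar>v $ i\<bar> \<le> B)"
  unfolding lp_norm_def by (auto simp: Max_le_iff)

lemma abs_nth_le_lp_norm_infinity: "i < dim_vec v \<Longrightarrow> \<bar>v $ i\<bar> \<le> lp_norm \<infinity> v"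
  unfolding lp_norm_def by (auto intro: Max_ge)

lemma lp_norm_nonneg: "0 \<le> lp_norm p v"
  unfolding lp_norm_def by (auto intro: Max_ge)

lemma powr_le_self: "0 \<le> x \<Longrightarrow> x \<le> 1 \<Longrightarrow> 1 \<le> (q::real) \<Longrightarrow> x powr q \<le> x"
  using powr_mono'[of 1 q x] by (cases "x = 0") auto

lemma abs_nth_le_lp_norm:
  assumes "1 \<le> p" "i < dim_vec v" shows "\<bar>v $ i\<bar> \<le> lp_norm p v"
proof (cases "p = \<infinity>")
  case True then show ?thesis using assms abs_nth_le_lp_norm_infinity by simp
next
  case False
  define q where "q = real_of_ereal p"
  have q: "1 \<le> q" using real_of_ereal_ge_1 assms False q_def by auto
  have "\<bar>v $ i\<bar> powr q \<le> (\<Sum>j<dim_vec v. \<bar>v $ j\<bar> powr q)"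
    by (rule member_le_sum) (use assms in auto)
  then have "(\<bar>v $ i\<bar> powr q) powr (1/q) \<le> (\<Sum>j<dim_vec v. \<bar>v $ j\<bar> powr q) powr (1/q)"
    using q by (intro powr_mono2) (auto intro: sum_nonneg)
  moreover have "(\<bar>v $ i\<bar> powr q) powr (1/q) = \<bar>v $ i\<bar>" using q by (simp add: powr_powr)
  ultimately show ?thesis using False by (simp add: lp_norm_finite q_def)
qed

lemma lp_norm_eq_0_nth: "1 \<le> p \<Longrightarrow> lp_norm p v = 0 \<Longrightarrow> i < dim_vec v \<Longrightarrow> v $ i = 0"
  using abs_nth_le_lp_norm[of p i v] by simp

lemma lp_norm_mono:
  assumes "1 \<le> p" "dim_vec u = dim_vec v" "\<And>i. i < dim_vec v \<Longrightarrow> \<bar>u $ i\<bar> \<le> \<bar>v $ i\<bar>"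
  shows "lp_norm p u \<le> lp_norm p v"
proof (cases "p = \<infinity>")
  case True then show ?thesis
    using assms by (auto simp: lp_norm_infinity_le_iff lp_norm_nonneg
        intro: order_trans[OF _ abs_nth_le_lp_norm_infinity])
next
  case False
  define q where "q = real_of_ereal p"
  have q: "1 \<le> q" using real_of_ereal_ge_1 assms False q_def by auto
  have "(\<Sum>j<dim_vec u. \<bar>u $ j\<bar> powr q) \<le> (\<Sum>j<dim_vec v. \<bar>v $ j\<bar> powr q)"
    using assms q by (auto intro!: sum_mono powr_mono2)
  then show ?thesis
    using False q by (auto simp: lp_norm_finite q_def[symmetric] intro!: powr_mono2 sum_nonneg)
qed

lemma lp_norm_smult_le: assumes "1 \<le> p" shows "lp_norm p (c \<cdot>\<^sub>v v) \<le> \<bar>c\<bar> * lp_norm p v"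
proof (cases "p = \<infinity>")
  case True then show ?thesis
    by (auto simp: lp_norm_infinity_le_iff abs_mult lp_norm_nonneg abs_nth_le_lp_norm_infinity
        intro!: mult_left_mono)
next
  case False
  define q where "q = real_of_ereal p"
  have q: "1 \<le> q" using real_of_ereal_ge_1 assms False q_def by auto
  have "(\<Sum>j<dim_vec v. \<bar>(c \<cdot>\<^sub>v v) $ j\<bar> powr q) = \<bar>c\<bar> powr q * (\<Sum>j<dim_vec v. \<bar>v $ j\<bar> powr q)"
    by (simp add: abs_mult powr_mult sum_distrib_left)
  then have "lp_norm p (c \<cdot>\<^sub>v v) = (\<bar>c\<bar> powr q) powr (1/q) * lp_norm p v"
    using False by (simp add: lp_norm_finite q_def[symmetric] powr_mult sum_nonneg)
  also have "(\<bar>c\<bar> powr q) powr (1/q) = \<bar>c\<bar>" using q by (simp add: powr_powr)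
  finally show ?thesis by simp
qed

lemma lp_norm_smult: assumes "1 \<le> p" shows "lp_norm p (c \<cdot>\<^sub>v v) = \<bar>c\<bar> * lp_norm p v"
proof (cases "c = 0")
  case True then show ?thesis
    using lp_norm_smult_le[OF assms, of 0 v] lp_norm_nonneg[of p "0 \<cdot>\<^sub>v v"] by simp
next
  case False
  have "lp_norm p v = lp_norm p ((1/c) \<cdot>\<^sub>v (c \<cdot>\<^sub>v v))" using False by (simp add: smult_smult_assoc)
  also have "\<dots> \<le> \<bar>1/c\<bar> * lp_norm p (c \<cdot>\<^sub>v v)" by (rule lp_norm_smult_le[OF assms])
  finally have "\<bar>c\<bar> * lp_norm p v \<le> lp_norm p (c \<cdot>\<^sub>v v)" using False by (simp add: field_simps)
  then show ?thesis using lp_norm_smult_le[OF assms, of c v] by simp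
qed

lemma lp_norm_le_sum_abs: assumes "1 \<le> p" shows "lp_norm p v \<le> (\<Sum>i<dim_vec v. \<bar>v $ i\<bar>)"
proof (cases "p = \<infinity>")
  case True then show ?thesis
    by (auto simp: lp_norm_infinity_le_iff sum_nonneg intro!: member_le_sum)
next
  case False
  define q where "q = real_of_ereal p"
  have q: "1 \<le> q" using real_of_ereal_ge_1 assms False q_def by auto
  define T where "T = (\<Sum>i<dim_vec v. \<bar>v $ i\<bar>)"
  show ?thesis
  proof (cases "T = 0")
    case True
    then have "\<forall>i<dim_vec v. \<bar>v $ i\<bar> = 0" unfolding T_def by (subst (asm) sum_nonneg_eq_0_iff) auto
    then show ?thesis using False by (simp add: lp_norm_finite)
  next
    case False
    then have T: "T > 0" unfolding T_def by (simp add: order.not_eq_order_implies_strict sum_nonneg)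
    have le_T: "\<bar>v $ i\<bar> \<le> T" if "i < dim_vec v" for i
      unfolding T_def by (rule member_le_sum) (use that in auto)
    \<comment> \<open>\<open>(\<Sum> x\<^sub>i\<^sup>q) \<le> T\<^sup>q\<close> because each \<open>x\<^sub>i / T \<le> 1\<close>, so \<open>(x\<^sub>i / T)\<^sup>q \<le> x\<^sub>i / T\<close>.\<close>
    have "(\<Sum>i<dim_vec v. \<bar>v $ i\<bar> powr q) = (\<Sum>i<dim_vec v. T powr q * (\<bar>v $ i\<bar> / T) powr q)"
      using T by (intro sum.cong) (auto simp: powr_divide)
    also have "\<dots> \<le> (\<Sum>i<dim_vec v. T powr q * (\<bar>v $ i\<bar> / T))"
      using T le_T q by (intro sum_mono mult_left_mono powr_le_self) auto
    also have "\<dots> = T powr q"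
      using T by (simp add: sum_distrib_left[symmetric] sum_divide_distrib[symmetric] T_def)
    finally have "(\<Sum>i<dim_vec v. \<bar>v $ i\<bar> powr q) powr (1/q) \<le> (T powr q) powr (1/q)"
      using q by (intro powr_mono2) (auto intro: sum_nonneg)
    also have "\<dots> = T" using q T by (simp add: powr_powr)
    finally show ?thesis using \<open>p \<noteq> \<infinity>\<close> by (simp add: lp_norm_finite q_def T_def)
  qed
qed

lemma convex_powr_combination:
  fixes a b l q :: real
  assumes "0 \<le> a" "0 \<le> b" "0 \<le> l" "l \<le> 1" "1 \<le> q"
  shows "(l * a + (1 - l) * b) powr q \<le> l * a powr q + (1 - l) * b powr q"
proof -
  consider "a = 0" | "b = 0" | "a > 0" "b > 0" using assms(1,2) by (metis le_less)
  then show ?thesis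
  proof cases
    case 1
    have "((1 - l) * b) powr q = (1 - l) powr q * b powr q" using assms by (simp add: powr_mult)
    also have "\<dots> \<le> (1 - l) * b powr q"
      using assms powr_le_self[of "1 - l" q] by (intro mult_right_mono) auto
    finally show ?thesis using 1 by simp
  next
    case 2
    have "(l * a) powr q = l powr q * a powr q" using assms by (simp add: powr_mult)
    also have "\<dots> \<le> l * a powr q" using assms powr_le_self[of l q] by (intro mult_right_mono) auto
    finally show ?thesis using 2 by simp
  next
    case 3
    have "(\<lambda>x. x powr q) ((1 - (1 - l)) *\<^sub>R a + (1 - l) *\<^sub>R b)
        \<le> (1 - (1 - l)) * (\<lambda>x. x powr q) a + (1 - l) * (\<lambda>x. x powr q) b"
      by (rule convex_onD[OF powr_convex]) (use assms 3 in auto)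
    then show ?thesis by simp
  qed
qed

lemma abs_add_powr_le_convex_split:
  fixes x y a b q :: real
  assumes "0 < a" "0 < b" "1 \<le> q"
  shows "\<bar>x + y\<bar> powr q \<le> (a + b) powr q * (a / (a + b) * (\<bar>x\<bar> / a) powr q + b / (a + b) * (\<bar>y\<bar> / b) powr q)"
proof -
  define l where "l = a / (a + b)"
  have l: "0 \<le> l" "l \<le> 1" "1 - l = b / (a + b)" using assms by (auto simp: l_def field_simps)
  have "(a + b) * (l * (\<bar>x\<bar> / a)) = \<bar>x\<bar>" "(a + b) * ((1 - l) * (\<bar>y\<bar> / b)) = \<bar>y\<bar>"
    using assms by (simp_all add: l(3)) (simp add: l_def)
  then have "(a + b) * (l * (\<bar>x\<bar> / a) + (1 - l) * (\<bar>y\<bar> / b)) = \<bar>x\<bar> + \<bar>y\<bar>"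
    by (simp only: distrib_left)
  then have "\<bar>x + y\<bar> \<le> (a + b) * (l * (\<bar>x\<bar> / a) + (1 - l) * (\<bar>y\<bar> / b))"
    by (simp add: abs_triangle_ineq)
  then have "\<bar>x + y\<bar> powr q \<le> ((a + b) * (l * (\<bar>x\<bar> / a) + (1 - l) * (\<bar>y\<bar> / b))) powr q"
    using assms by (intro powr_mono2) auto
  also have "\<dots> = (a + b) powr q * (l * (\<bar>x\<bar> / a) + (1 - l) * (\<bar>y\<bar> / b)) powr q"
    using assms l(1,2) by (intro powr_mult)
  also have "\<dots> \<le> (a + b) powr q * (l * (\<bar>x\<bar> / a) powr q + (1 - l) * (\<bar>y\<bar> / b) powr q)"
    using assms l by (intro mult_left_mono convex_powr_combination) auto
  finally show ?thesis by (metis l(3) l_def)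
qed

lemma sum_powr_normalized:
  assumes "p \<noteq> \<infinity>" "1 \<le> p" "lp_norm p v > 0"
  shows "(\<Sum>i<dim_vec v. (\<bar>v $ i\<bar> / lp_norm p v) powr real_of_ereal p) = 1"
proof -
  define q where "q = real_of_ereal p"
  have q: "1 \<le> q" using real_of_ereal_ge_1 assms q_def by auto
  have "lp_norm p v powr q = (\<Sum>i<dim_vec v. \<bar>v $ i\<bar> powr q)"
    using assms q by (simp add: lp_norm_finite q_def[symmetric] powr_powr sum_nonneg)
  moreover have "lp_norm p v powr q > 0" using assms by simp
  ultimately show ?thesis
    using assms by (simp add: q_def[symmetric] powr_divide sum_divide_distrib[symmetric])
qed

lemma lp_norm_triangle_degenerate:
  assumes "1 \<le> p" "dim_vec u = dim_vec v" "lp_norm p u = 0 \<or> lp_norm p v = 0"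
  shows "lp_norm p (u + v) \<le> lp_norm p u + lp_norm p v"
  using assms(3)
proof
  assume u: "lp_norm p u = 0"
  have "lp_norm p (u + v) \<le> lp_norm p v"
    using assms(2) lp_norm_eq_0_nth[OF assms(1) u] by (intro lp_norm_mono[OF assms(1)]) auto
  then show ?thesis using u by simp
next
  assume v: "lp_norm p v = 0"
  have "lp_norm p (u + v) \<le> lp_norm p u"
    using assms(2) lp_norm_eq_0_nth[OF assms(1) v] by (intro lp_norm_mono[OF assms(1)]) auto
  then show ?thesis using v by simp
qed

lemma lp_norm_triangle:
  assumes "1 \<le> p" "dim_vec u = dim_vec v"
  shows "lp_norm p (u + v) \<le> lp_norm p u + lp_norm p v"
proof (cases "p = \<infinity>")
  case True then show ?thesis
    using assms by (auto simp: lp_norm_infinity_le_iff lp_norm_nonneg abs_nth_le_lp_norm_infinity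
        intro!: add_nonneg_nonneg order_trans[OF abs_triangle_ineq] add_mono)
next
  case False
  define q where "q = real_of_ereal p"
  have q: "1 \<le> q" using real_of_ereal_ge_1 assms False q_def by auto
  define a where "a = lp_norm p u"
  define b where "b = lp_norm p v"
  consider "a = 0" | "b = 0" | "a > 0" "b > 0"
    using lp_norm_nonneg[of p u] lp_norm_nonneg[of p v] unfolding a_def b_def by linarith
  then show ?thesis
  proof cases
    case 1
    then show ?thesis using lp_norm_triangle_degenerate[OF assms] by (simp add: a_def)
  next
    case 2
    then show ?thesis using lp_norm_triangle_degenerate[OF assms] by (simp add: b_def)
  next
    case 3
    have "(\<Sum>i<dim_vec v. \<bar>(u + v) $ i\<bar> powr q)
        \<le> (\<Sum>i<dim_vec v. (a + b) powr q * (a / (a + b) * (\<bar>u $ i\<bar> / a) powr q + b / (a + b) * (\<bar>v $ i\<bar> / b) powr q))"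
    proof (rule sum_mono)
      fix i assume "i \<in> {..<dim_vec v}"
      then show "\<bar>(u + v) $ i\<bar> powr q \<le> (a + b) powr q * (a / (a + b) * (\<bar>u $ i\<bar> / a) powr q + b / (a + b) * (\<bar>v $ i\<bar> / b) powr q)"
        using abs_add_powr_le_convex_split[OF 3 q, of "u $ i" "v $ i"] assms(2) by simp
    qed
    also have "\<dots> = (a + b) powr q * (a / (a + b) * (\<Sum>i<dim_vec u. (\<bar>u $ i\<bar> / a) powr q)
        + b / (a + b) * (\<Sum>i<dim_vec v. (\<bar>v $ i\<bar> / b) powr q))"
      using assms(2) by (simp only: sum_distrib_left[symmetric] sum.distrib)
    also have "\<dots> = (a + b) powr q"
      using 3 False assms(1) sum_powr_normalized[of p u] sum_powr_normalized[of p v]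
      by (simp add: a_def b_def q_def add_divide_distrib[symmetric])
    finally have "(\<Sum>i<dim_vec v. \<bar>(u + v) $ i\<bar> powr q) powr (1/q) \<le> ((a + b) powr q) powr (1/q)"
      using q by (intro powr_mono2) (auto intro: sum_nonneg)
    also have "\<dots> = a + b" using q 3 by (simp add: powr_powr)
    finally show ?thesis using False assms(2) by (simp add: lp_norm_finite q_def a_def b_def)
  qed
qed

lemma lp_norm_mult_mat_vec_le_sum:
  assumes "1 \<le> p" "dim_vec x = dim_col A"
  shows "lp_norm p (A *\<^sub>v x) \<le> (\<Sum>i<dim_row A. \<Sum>j<dim_col A. \<bar>A $$ (i, j)\<bar> * \<bar>x $ j\<bar>)"
proof -
  have "lp_norm p (A *\<^sub>v x) \<le> (\<Sum>i<dim_row A. \<bar>(A *\<^sub>v x) $ i\<bar>)"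
    using lp_norm_le_sum_abs[OF assms(1), of "A *\<^sub>v x"] by simp
  also have "\<dots> \<le> (\<Sum>i<dim_row A. \<Sum>j<dim_col A. \<bar>A $$ (i, j)\<bar> * \<bar>x $ j\<bar>)"
  proof (rule sum_mono)
    fix i assume "i \<in> {..<dim_row A}"
    then have "(A *\<^sub>v x) $ i = (\<Sum>j<dim_col A. A $$ (i, j) * x $ j)"
      using assms by (simp add: scalar_prod_def atLeast0LessThan)
    then show "\<bar>(A *\<^sub>v x) $ i\<bar> \<le> (\<Sum>j<dim_col A. \<bar>A $$ (i, j)\<bar> * \<bar>x $ j\<bar>)"
      by (simp add: order_trans[OF sum_abs] abs_mult)
  qed
  finally show ?thesis .
qed

lemma bdd_above_op_norm_set:
  assumes "1 \<le> p"
  shows "bdd_above {lp_norm p (A *\<^sub>v x) | x. x \<in> carrier_vec (dim_col A) \<and> lp_norm p x \<le> 1}"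
proof (rule bdd_aboveI)
  fix y assume "y \<in> {lp_norm p (A *\<^sub>v x) | x. x \<in> carrier_vec (dim_col A) \<and> lp_norm p x \<le> 1}"
  then obtain x where x: "x \<in> carrier_vec (dim_col A)" "lp_norm p x \<le> 1" and y: "y = lp_norm p (A *\<^sub>v x)"
    by auto
  have "y \<le> (\<Sum>i<dim_row A. \<Sum>j<dim_col A. \<bar>A $$ (i, j)\<bar> * \<bar>x $ j\<bar>)"
    using lp_norm_mult_mat_vec_le_sum[OF assms, of x A] x y by simp
  also have "\<dots> \<le> (\<Sum>i<dim_row A. \<Sum>j<dim_col A. \<bar>A $$ (i, j)\<bar>)"
    using x abs_nth_le_lp_norm[OF assms, of _ x]
    by (intro sum_mono mult_left_le) (auto intro: order_trans)
  finally show "y \<le> (\<Sum>i<dim_row A. \<Sum>j<dim_col A. \<bar>A $$ (i, j)\<bar>)" .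
qed

lemma lp_norm_le_op_norm_unit:
  "1 \<le> p \<Longrightarrow> x \<in> carrier_vec (dim_col A) \<Longrightarrow> lp_norm p x \<le> 1 \<Longrightarrow> lp_norm p (A *\<^sub>v x) \<le> op_norm p A"
  unfolding op_norm_def by (rule cSup_upper[OF _ bdd_above_op_norm_set]) auto

lemma op_norm_nonneg: "1 \<le> p \<Longrightarrow> 0 \<le> op_norm p A"
  using lp_norm_le_op_norm_unit[of p "0\<^sub>v (dim_col A)" A] lp_norm_le_sum_abs[of p "0\<^sub>v (dim_col A)"]
    lp_norm_nonneg[of p "A *\<^sub>v 0\<^sub>v (dim_col A)"]
  by simp

lemma lp_norm_mult_mat_vec_le:
  assumes "1 \<le> p" "A \<in> carrier_mat m k" "x \<in> carrier_vec k"
  shows "lp_norm p (A *\<^sub>v x) \<le> op_norm p A * lp_norm p x"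
proof (cases "lp_norm p x = 0")
  case True
  then have "lp_norm p (A *\<^sub>v x) \<le> 0"
    using lp_norm_mult_mat_vec_le_sum[OF assms(1), of x A] lp_norm_eq_0_nth[OF assms(1)] assms by simp
  then show ?thesis using True by simp
next
  case False
  define t where "t = lp_norm p x"
  have t: "t > 0" using False lp_norm_nonneg[of p x] t_def by simp
  have "A *\<^sub>v ((1/t) \<cdot>\<^sub>v x) = (1/t) \<cdot>\<^sub>v (A *\<^sub>v x)" by (rule mult_mat_vec[OF assms(2,3)])
  moreover have "lp_norm p (A *\<^sub>v ((1/t) \<cdot>\<^sub>v x)) \<le> op_norm p A"
    using assms t by (intro lp_norm_le_op_norm_unit) (auto simp: lp_norm_smult t_def)
  ultimately have "lp_norm p (A *\<^sub>v x) / t \<le> op_norm p A" using t by (simp add: lp_norm_smult[OF assms(1)])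
  then show ?thesis using t by (simp add: t_def[symmetric] field_simps)
qed

definition linearization_error :: "real \<Rightarrow> (real \<Rightarrow> real) \<Rightarrow> real vec \<Rightarrow> real vec \<Rightarrow> real vec" where
  "linearization_error c \<phi> y y' = map_vec \<phi> y - map_vec \<phi> y' - c \<cdot>\<^sub>v (y - y')"

lemma lp_norm_linearization_error_le:
  assumes slope: "\<forall>a b. a \<noteq> b \<longrightarrow> \<alpha> \<le> (\<phi> a - \<phi> b) / (a - b) \<and> (\<phi> a - \<phi> b) / (a - b) \<le> \<beta>"
    and "\<alpha> \<le> \<beta>" "1 \<le> p" "y \<in> carrier_vec m" "y' \<in> carrier_vec m"
  shows "lp_norm p (linearization_error ((\<alpha> + \<beta>) / 2) \<phi> y y') \<le> (\<beta> - \<alpha>) / 2 * lp_norm p (y - y')"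
proof -
  have pointwise: "\<bar>\<phi> a - \<phi> b - (\<alpha> + \<beta>) / 2 * (a - b)\<bar> \<le> (\<beta> - \<alpha>) / 2 * \<bar>a - b\<bar>" for a b
  proof (cases "a = b")
    case False
    define s where "s = (\<phi> a - \<phi> b) / (a - b)"
    have "\<alpha> \<le> s" "s \<le> \<beta>" using slope False by (auto simp: s_def)
    then have s: "\<bar>s - (\<alpha> + \<beta>) / 2\<bar> \<le> (\<beta> - \<alpha>) / 2" by (simp add: abs_le_iff field_simps)
    have "\<phi> a - \<phi> b = s * (a - b)" using False by (simp add: s_def)
    then have "\<bar>\<phi> a - \<phi> b - (\<alpha> + \<beta>) / 2 * (a - b)\<bar> = \<bar>s - (\<alpha> + \<beta>) / 2\<bar> * \<bar>a - b\<bar>"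
      by (simp add: abs_mult[symmetric] algebra_simps)
    also have "\<dots> \<le> (\<beta> - \<alpha>) / 2 * \<bar>a - b\<bar>" using s by (rule mult_right_mono) simp
    finally show ?thesis .
  qed (use assms in simp)
  have "lp_norm p (linearization_error ((\<alpha> + \<beta>) / 2) \<phi> y y') \<le> lp_norm p (((\<beta> - \<alpha>) / 2) \<cdot>\<^sub>v (y - y'))"
    using assms pointwise by (intro lp_norm_mono) (auto simp: linearization_error_def abs_mult)
  also have "\<dots> = (\<beta> - \<alpha>) / 2 * lp_norm p (y - y')" using assms by (simp add: lp_norm_smult)
  finally show ?thesis .
qed

lemma smult_mat_mult_mat_vec:
  "M \<in> carrier_mat m k \<Longrightarrow> v \<in> carrier_vec k \<Longrightarrow> ((c::real) \<cdot>\<^sub>m M) *\<^sub>v v = c \<cdot>\<^sub>v (M *\<^sub>v v)"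
  by (intro eq_vecI) (auto simp: scalar_prod_def sum_distrib_left ac_simps)

lemma layer_diff_eq_linearized:
  fixes A B C :: "real mat"
  assumes A: "A \<in> carrier_mat m k" and B: "B \<in> carrier_mat m d" and C: "C \<in> carrier_mat d k"
    and x: "x \<in> carrier_vec k" and x': "x' \<in> carrier_vec k"
  shows "(A *\<^sub>v x + B *\<^sub>v map_vec \<phi> (C *\<^sub>v x)) - (A *\<^sub>v x' + B *\<^sub>v map_vec \<phi> (C *\<^sub>v x'))
    = (A + c \<cdot>\<^sub>m (B * C)) *\<^sub>v (x - x') + B *\<^sub>v linearization_error c \<phi> (C *\<^sub>v x) (C *\<^sub>v x')"
proof -
  have "(A + c \<cdot>\<^sub>m (B * C)) *\<^sub>v (x - x') = A *\<^sub>v (x - x') + (c \<cdot>\<^sub>m (B * C)) *\<^sub>v (x - x')"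
    using A B C x x' by (intro add_mult_distrib_mat_vec) auto
  also have "(c \<cdot>\<^sub>m (B * C)) *\<^sub>v (x - x') = c \<cdot>\<^sub>v (B *\<^sub>v (C *\<^sub>v x - C *\<^sub>v x'))"
    using B C x x' by (simp add: smult_mat_mult_mat_vec[of _ m k] mult_minus_distrib_mat_vec[OF C])
  also have "A *\<^sub>v (x - x') = A *\<^sub>v x - A *\<^sub>v x'" using A x x' by (rule mult_minus_distrib_mat_vec)
  finally have linear: "(A + c \<cdot>\<^sub>m (B * C)) *\<^sub>v (x - x')
      = (A *\<^sub>v x - A *\<^sub>v x') + c \<cdot>\<^sub>v (B *\<^sub>v (C *\<^sub>v x - C *\<^sub>v x'))" .
  have "B *\<^sub>v linearization_error c \<phi> (C *\<^sub>v x) (C *\<^sub>v x')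
      = B *\<^sub>v map_vec \<phi> (C *\<^sub>v x) - B *\<^sub>v map_vec \<phi> (C *\<^sub>v x') - c \<cdot>\<^sub>v (B *\<^sub>v (C *\<^sub>v x - C *\<^sub>v x'))"
    using B C x x' unfolding linearization_error_def
    by (simp add: mult_minus_distrib_mat_vec[OF B] mult_mat_vec[OF B])
  then show ?thesis unfolding linear using A B C x x' by (intro eq_vecI) auto
qed

lemma hchain_carrier:
  assumes "\<And>k. k < L \<Longrightarrow> Hh k \<in> carrier_mat (n (Suc k)) (n k)" "i + m \<le> L"
  shows "hchain n Hh i m \<in> carrier_mat (n (i + m)) (n i)"
  using assms(2) by (induction m) (auto intro!: mult_carrier_mat assms(1))

lemma lp_norm_unrolled_recursion_le:
  assumes p: "1 \<le> p"
    and Hh: "\<And>k. k < L \<Longrightarrow> Hh k \<in> carrier_mat (n (Suc k)) (n k)"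
    and G: "\<And>k. k < L \<Longrightarrow> G k \<in> carrier_mat (n (Suc k)) (d k)"
    and \<delta>: "\<And>k. k \<le> L \<Longrightarrow> \<delta> k \<in> carrier_vec (n k)"
    and e: "\<And>k. k < L \<Longrightarrow> e k \<in> carrier_vec (d k)"
    and recursion: "\<And>k. k < L \<Longrightarrow> \<delta> (Suc k) = Hh k *\<^sub>v \<delta> k + G k *\<^sub>v e k"
    and "j \<le> L" "M \<in> carrier_mat r (n j)"
  shows "lp_norm p (M *\<^sub>v \<delta> j) \<le> op_norm p (M * hchain n Hh 0 j) * lp_norm p (\<delta> 0)
           + (\<Sum>i<j. op_norm p (M * hchain n Hh (Suc i) (j - Suc i) * G i) * lp_norm p (e i))"
  using assms(7,8)
proof (induction j arbitrary: M r)
  case 0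
  then show ?case using lp_norm_mult_mat_vec_le[OF p _ \<delta>] by simp
next
  case (Suc j)
  have j: "j < L" using Suc.prems(1) by simp
  note carriers = Hh[OF j] G[OF j] \<delta>[of j] e[OF j] Suc.prems(2)
  have chain: "M * Hh j * hchain n Hh i (j - i) = M * hchain n Hh i (Suc j - i)" if "i \<le> j" for i
  proof -
    have "hchain n Hh i (j - i) \<in> carrier_mat (n j) (n i)"
      using hchain_carrier[of L Hh n i "j - i"] Hh j that by simp
    then show ?thesis using carriers that by (simp add: Suc_diff_le)
  qed
  have "M *\<^sub>v \<delta> (Suc j) = (M * Hh j) *\<^sub>v \<delta> j + (M * G j) *\<^sub>v e j"
    using carriers j by (simp add: recursion mult_add_distrib_mat_vec)
  then have "lp_norm p (M *\<^sub>v \<delta> (Suc j)) \<le> lp_norm p ((M * Hh j) *\<^sub>v \<delta> j) + lp_norm p ((M * G j) *\<^sub>v e j)"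
    using carriers j by (simp add: lp_norm_triangle[OF p])
  also have "lp_norm p ((M * G j) *\<^sub>v e j) \<le> op_norm p (M * G j) * lp_norm p (e j)"
    using carriers j by (intro lp_norm_mult_mat_vec_le[OF p]) auto
  also have "lp_norm p ((M * Hh j) *\<^sub>v \<delta> j) \<le> op_norm p (M * Hh j * hchain n Hh 0 j) * lp_norm p (\<delta> 0)
      + (\<Sum>i<j. op_norm p (M * Hh j * hchain n Hh (Suc i) (j - Suc i) * G i) * lp_norm p (e i))"
    using Suc.IH[of "M * Hh j" r] carriers j by (simp del: assoc_mult_mat_vec)
  also have "(\<Sum>i<j. op_norm p (M * Hh j * hchain n Hh (Suc i) (j - Suc i) * G i) * lp_norm p (e i))
      = (\<Sum>i<j. op_norm p (M * hchain n Hh (Suc i) (Suc j - Suc i) * G i) * lp_norm p (e i))"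
    using chain by (intro sum.cong) auto
  finally show ?case
    using chain[of 0] carriers by (simp add: algebra_simps)
qed

lemma lp_norm_diff_le_lip_m:
  assumes p: "1 \<le> p" and "\<alpha> \<le> \<beta>"
    and W: "\<And>k. k \<le> L \<Longrightarrow> W k \<in> carrier_mat (d k) (n k)"
    and Hh: "\<And>k. k < L \<Longrightarrow> Hhat \<alpha> \<beta> W H G k \<in> carrier_mat (n (Suc k)) (n k)"
    and G: "\<And>k. k < L \<Longrightarrow> G k \<in> carrier_mat (n (Suc k)) (d k)"
    and \<delta>: "\<And>k. k \<le> L \<Longrightarrow> \<delta> k \<in> carrier_vec (n k)"
    and e: "\<And>k. k < L \<Longrightarrow> e k \<in> carrier_vec (d k)"
    and recursion: "\<And>k. k < L \<Longrightarrow> \<delta> (Suc k) = Hhat \<alpha> \<beta> W H G k *\<^sub>v \<delta> k + G k *\<^sub>v e k"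
    and e_le: "\<And>k. k < L \<Longrightarrow> lp_norm p (e k) \<le> (\<beta> - \<alpha>) / 2 * lp_norm p (W k *\<^sub>v \<delta> k)"
    and "j \<le> L"
  shows "lp_norm p (W j *\<^sub>v \<delta> j) \<le> lip_m p \<alpha> \<beta> n W H G j * lp_norm p (\<delta> 0)"
  using \<open>j \<le> L\<close>
proof (induction j rule: less_induct)
  case (less j)
  show ?case
  proof (cases j)
    case 0
    then show ?thesis using lp_norm_mult_mat_vec_le[OF p W \<delta>] by simp
  next
    case (Suc k)
    define Hc where "Hc i = op_norm p (W j * hchain n (Hhat \<alpha> \<beta> W H G) (Suc i) (j - Suc i) * G i)" for i
    have "lp_norm p (W j *\<^sub>v \<delta> j) \<le> op_norm p (W j * hchain n (Hhat \<alpha> \<beta> W H G) 0 j) * lp_norm p (\<delta> 0)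
        + (\<Sum>i<j. Hc i * lp_norm p (e i))"
      unfolding Hc_def
      using lp_norm_unrolled_recursion_le[OF p Hh G \<delta> e recursion less.prems W[OF less.prems]] .
    also have "(\<Sum>i<j. Hc i * lp_norm p (e i))
        \<le> (\<Sum>i<j. Hc i * ((\<beta> - \<alpha>) / 2 * (lip_m p \<alpha> \<beta> n W H G i * lp_norm p (\<delta> 0))))"
    proof (intro sum_mono mult_left_mono)
      fix i assume "i \<in> {..<j}"
      then have i: "i < j" "i < L" using less.prems by auto
      have "0 \<le> (\<beta> - \<alpha>) / 2" using \<open>\<alpha> \<le> \<beta>\<close> by simp
      then show "lp_norm p (e i) \<le> (\<beta> - \<alpha>) / 2 * (lip_m p \<alpha> \<beta> n W H G i * lp_norm p (\<delta> 0))"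
        using e_le[OF i(2)] less.IH[OF i(1)] i(2) by (meson mult_left_mono order_trans less_imp_le)
    qed (simp add: Hc_def op_norm_nonneg[OF p])
    also have "op_norm p (W j * hchain n (Hhat \<alpha> \<beta> W H G) 0 j) * lp_norm p (\<delta> 0)
        + (\<Sum>i<j. Hc i * ((\<beta> - \<alpha>) / 2 * (lip_m p \<alpha> \<beta> n W H G i * lp_norm p (\<delta> 0))))
        = lip_m p \<alpha> \<beta> n W H G j * lp_norm p (\<delta> 0)"
      unfolding Suc Hc_def
      by (simp add: lessThan_Suc_atMost atLeast0AtMost sum_distrib_left sum_distrib_right algebra_simps)
    finally show ?thesis by simp
  qed
qed

lemma net_x_carrier:
  assumes W: "\<And>k. k \<le> L \<Longrightarrow> W k \<in> carrier_mat (d k) (n k)"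
    and H: "\<And>k. k < L \<Longrightarrow> H k \<in> carrier_mat (n (Suc k)) (n k)"
    and G: "\<And>k. k < L \<Longrightarrow> G k \<in> carrier_mat (n (Suc k)) (d k)"
    and "x0 \<in> carrier_vec (n 0)" "k \<le> L"
  shows "net_x \<phi> W H G k x0 \<in> carrier_vec (n k)"
  using \<open>k \<le> L\<close>
proof (induction k)
  case (Suc k)
  then show ?case using W[of k] H[of k] G[of k] by simp
qed (simp add: assms(4))

lemma net_x_diff_Suc:
  assumes "W k \<in> carrier_mat (d k) (n k)" "H k \<in> carrier_mat (n (Suc k)) (n k)"
    "G k \<in> carrier_mat (n (Suc k)) (d k)"
    "net_x \<phi> W H G k x0 \<in> carrier_vec (n k)" "net_x \<phi> W H G k x0' \<in> carrier_vec (n k)"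
  shows "net_x \<phi> W H G (Suc k) x0 - net_x \<phi> W H G (Suc k) x0'
    = Hhat \<alpha> \<beta> W H G k *\<^sub>v (net_x \<phi> W H G k x0 - net_x \<phi> W H G k x0')
      + G k *\<^sub>v linearization_error ((\<alpha> + \<beta>) / 2) \<phi> (W k *\<^sub>v net_x \<phi> W H G k x0) (W k *\<^sub>v net_x \<phi> W H G k x0')"
  using layer_diff_eq_linearized[OF assms(2,3,1,4,5)] by (simp add: Hhat_def)

lemma net_y_lipschitz:
  assumes slope: "\<forall>a b. a \<noteq> b \<longrightarrow> \<alpha> \<le> (\<phi> a - \<phi> b) / (a - b) \<and> (\<phi> a - \<phi> b) / (a - b) \<le> \<beta>"
    and "\<alpha> \<le> \<beta>" "1 \<le> p"
    and W: "\<And>k. k \<le> L \<Longrightarrow> W k \<in> carrier_mat (d k) (n k)"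
    and H: "\<And>k. k < L \<Longrightarrow> H k \<in> carrier_mat (n (Suc k)) (n k)"
    and G: "\<And>k. k < L \<Longrightarrow> G k \<in> carrier_mat (n (Suc k)) (d k)"
    and k: "k \<le> L" and x0: "x0 \<in> carrier_vec (n 0)" and x0': "x0' \<in> carrier_vec (n 0)"
  shows "lp_norm p (net_y \<phi> W H G k x0 - net_y \<phi> W H G k x0') \<le> lip_m p \<alpha> \<beta> n W H G k * lp_norm p (x0 - x0')"
proof -
  have x: "net_x \<phi> W H G j x0 \<in> carrier_vec (n j)" and x': "net_x \<phi> W H G j x0' \<in> carrier_vec (n j)"
    if "j \<le> L" for j
    using W H G x0 x0' that by (auto intro: net_x_carrier[of L W d n H G])
  define \<delta> where "\<delta> j = net_x \<phi> W H G j x0 - net_x \<phi> W H G j x0'" for j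
  define e where "e j = linearization_error ((\<alpha> + \<beta>) / 2) \<phi> (W j *\<^sub>v net_x \<phi> W H G j x0) (W j *\<^sub>v net_x \<phi> W H G j x0')" for j
  have W\<delta>: "W j *\<^sub>v \<delta> j = net_y \<phi> W H G j x0 - net_y \<phi> W H G j x0'" if "j \<le> L" for j
    unfolding \<delta>_def net_y_def by (rule mult_minus_distrib_mat_vec[OF W[OF that] x[OF that] x'[OF that]])
  have "lp_norm p (W k *\<^sub>v \<delta> k) \<le> lip_m p \<alpha> \<beta> n W H G k * lp_norm p (\<delta> 0)"
  proof (rule lp_norm_diff_le_lip_m[where L = L and d = d and n = n])
    show "Hhat \<alpha> \<beta> W H G j \<in> carrier_mat (n (Suc j)) (n j)" if "j < L" for j
      using W[of j] H[OF that] G[OF that] that by (simp add: Hhat_def)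
    show "\<delta> j \<in> carrier_vec (n j)" if "j \<le> L" for j using x x' that by (simp add: \<delta>_def)
    show "e j \<in> carrier_vec (d j)" if "j < L" for j using W[of j] x[of j] x'[of j] that by (simp add: e_def linearization_error_def)
    show "\<delta> (Suc j) = Hhat \<alpha> \<beta> W H G j *\<^sub>v \<delta> j + G j *\<^sub>v e j" if "j < L" for j
      unfolding \<delta>_def e_def using that
      by (intro net_x_diff_Suc[OF W H G x x']) auto
    show "lp_norm p (e j) \<le> (\<beta> - \<alpha>) / 2 * lp_norm p (W j *\<^sub>v \<delta> j)" if "j < L" for j
    proof -
      have "W j *\<^sub>v net_x \<phi> W H G j x0 \<in> carrier_vec (d j)" "W j *\<^sub>v net_x \<phi> W H G j x0' \<in> carrier_vec (d j)"
        using W[of j] x[of j] x'[of j] that by auto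
      then show ?thesis
        unfolding e_def W\<delta>[OF less_imp_le[OF that]] net_y_def by (rule lp_norm_linearization_error_le[OF slope \<open>\<alpha> \<le> \<beta>\<close> \<open>1 \<le> p\<close>])
    qed
  qed (use assms W G k in auto)
  then show ?thesis
    unfolding W\<delta>[OF k, symmetric] by (simp add: \<delta>_def)
qed

theorem theorem2:
  fixes \<alpha> \<beta> :: real and \<phi> :: "real \<Rightarrow> real" and L :: nat
    and n d :: "nat \<Rightarrow> nat" and W H G :: "nat \<Rightarrow> real mat" and p :: ereal
  assumes "0 \<le> \<alpha>" and "\<alpha> \<le> \<beta>"
    and "\<forall>a b. a \<noteq> b \<longrightarrow> \<alpha> \<le> (\<phi> a - \<phi> b) / (a - b) \<and> (\<phi> a - \<phi> b) / (a - b) \<le> \<beta>"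
    and "L \<ge> 1"
    and "\<forall>k\<le>L. W k \<in> carrier_mat (d k) (n k)"
    and "W L = 1\<^sub>m (n L)"
    and "\<forall>k<L. H k \<in> carrier_mat (n (Suc k)) (n k) \<and> G k \<in> carrier_mat (n (Suc k)) (d k)"
    and "1 \<le> p"
  shows "\<forall>k\<le>L. \<forall>x0 x0'. x0 \<in> carrier_vec (n 0) \<longrightarrow> x0' \<in> carrier_vec (n 0) \<longrightarrow>
           lp_norm p (net_y \<phi> W H G k x0 - net_y \<phi> W H G k x0')
             \<le> lip_m p \<alpha> \<beta> n W H G k * lp_norm p (x0 - x0')"
  using net_y_lipschitz[OF assms(3,2,8)] assms(5,7) by blast

end
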